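(* Let $G$ be a connected graph with a fixed vertex $v_1$. Take a new vertex $z\notin V(G)$ and join it by a single edge to a vertex $u \in V(G)$ with $u \neq v_1$; denote the resulting graph by $G^+$. Then $\delta_{G^+}(z) = \delta_{G^+}(u)+1 = \delta_G(u)+1$.
   Context: All graphs are finite, simple, undirected. For a graph $H$ and vertex $x$, the transmission is $t_H(x)=\sum_{y\in V(H)}\mathrm{dist}_H(x,y)$. For a graph $H$ containing the fixed vertex $v_1$ and a vertex $x\neq v_1$ of $H$, define $\delta_H(x) = t_H(x) - t_{H-v_1}(x)$, where $H-v_1$ denotes $H$ with $v_1$ and its incident edges deleted. *)

theory Defs
  imports Complex_Main "HOL-Library.Extended_Real"
begin

definition simple_graph :: "'a set \<Rightarrow> ('a \<Rightarrow> 'a \<Rightarrow> bool) \<Rightarrow> bool" where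
  "simple_graph V E \<longleftrightarrow> finite V \<and> (\<forall>x y. E x y \<longrightarrow> x \<in> V \<and> y \<in> V)
     \<and> (\<forall>x y. E x y \<longrightarrow> E y x) \<and> (\<forall>x. \<not> E x x)"

definition is_walk :: "'a set \<Rightarrow> ('a \<Rightarrow> 'a \<Rightarrow> bool) \<Rightarrow> 'a list \<Rightarrow> bool" where
  "is_walk V E p \<longleftrightarrow> p \<noteq> [] \<and> set p \<subseteq> V \<and> (\<forall>i. Suc i < length p \<longrightarrow> E (p ! i) (p ! Suc i))"

definition gdist :: "'a set \<Rightarrow> ('a \<Rightarrow> 'a \<Rightarrow> bool) \<Rightarrow> 'a \<Rightarrow> 'a \<Rightarrow> enat" where
  "gdist V E x y = (if \<exists>p. is_walk V E p \<and> hd p = x \<and> last p = y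
      then enat (LEAST n. \<exists>p. is_walk V E p \<and> hd p = x \<and> last p = y \<and> length p = Suc n)
      else \<infinity>)"

definition connected_graph :: "'a set \<Rightarrow> ('a \<Rightarrow> 'a \<Rightarrow> bool) \<Rightarrow> bool" where
  "connected_graph V E \<longleftrightarrow> V \<noteq> {} \<and> (\<forall>x\<in>V. \<forall>y\<in>V. gdist V E x y \<noteq> \<infinity>)"

definition transmission :: "'a set \<Rightarrow> ('a \<Rightarrow> 'a \<Rightarrow> bool) \<Rightarrow> 'a \<Rightarrow> ereal" where
  "transmission V E x = (\<Sum>y\<in>V. ereal_of_enat (gdist V E x y))"

definition del_vert_V :: "'a set \<Rightarrow> 'a \<Rightarrow> 'a set" where
  "del_vert_V V v = V - {v}"
definition del_vert_E :: "('a \<Rightarrow> 'a \<Rightarrow> bool) \<Rightarrow> 'a \<Rightarrow> 'a \<Rightarrow> 'a \<Rightarrow> bool" where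
  "del_vert_E E v = (\<lambda>x y. E x y \<and> x \<noteq> v \<and> y \<noteq> v)"

definition delta :: "'a set \<Rightarrow> ('a \<Rightarrow> 'a \<Rightarrow> bool) \<Rightarrow> 'a \<Rightarrow> 'a \<Rightarrow> ereal" where
  "delta V E v1 x = transmission V E x - transmission (del_vert_V V v1) (del_vert_E E v1) x"

definition pend_E :: "('a \<Rightarrow> 'a \<Rightarrow> bool) \<Rightarrow> 'a \<Rightarrow> 'a \<Rightarrow> 'a \<Rightarrow> 'a \<Rightarrow> bool" where
  "pend_E E u z = (\<lambda>x y. E x y \<or> (x = u \<and> y = z) \<or> (x = z \<and> y = u))"

end

theory Submission
  imports Defs
begin

(* Every walk of G^+ that passes through the pendant vertex z does so along a detour u z u;
   deleting the detour gives a shorter walk of G.  Hence G^+ keeps the distances of G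
   between old vertices, and d(z, y) = d(u, y) + 1.  Summing, t(u) grows by 1 and t(z) equals
   t_G(u) + |V|.  Since G^+ - v1 is obtained from G - v1 by the same pendant construction, the
   same formulas hold there with |V| - 1 in place of |V|, and the claim is ereal arithmetic.
   G - v1 need not be connected: then t_{G-v1}(u) is infinite and all three deltas are -\<infinity>. *)

lemma is_walk_singleton [simp]: "is_walk V E [x] \<longleftrightarrow> x \<in> V"
  by (simp add: is_walk_def)

lemma is_walk_Cons_Cons [simp]:
  "is_walk V E (x # y # p) \<longleftrightarrow> x \<in> V \<and> E x y \<and> is_walk V E (y # p)"
  by (auto simp: is_walk_def nth_Cons less_Suc_eq_0_disj split: nat.splits)

lemma is_walk_Cons_hd:
  "is_walk V E q \<Longrightarrow> x \<in> V \<Longrightarrow> E x (hd q) \<Longrightarrow> is_walk V E (x # q)"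
  by (cases q) auto

lemma is_walk_mono:
  "is_walk V E p \<Longrightarrow> V \<subseteq> V' \<Longrightarrow> (\<And>x y. E x y \<Longrightarrow> E' x y) \<Longrightarrow> is_walk V' E' p"
  by (auto simp: is_walk_def)

definition has_walk_of_length :: "'a set \<Rightarrow> ('a \<Rightarrow> 'a \<Rightarrow> bool) \<Rightarrow> 'a \<Rightarrow> 'a \<Rightarrow> nat \<Rightarrow> bool" where
  "has_walk_of_length V E x y n \<longleftrightarrow> (\<exists>p. is_walk V E p \<and> hd p = x \<and> last p = y \<and> length p = Suc n)"

lemma gdist_eq_Least:
  "gdist V E x y = (if \<exists>n. has_walk_of_length V E x y n
     then enat (LEAST n. has_walk_of_length V E x y n) else \<infinity>)"
proof -
  have "(\<exists>p. is_walk V E p \<and> hd p = x \<and> last p = y) \<longleftrightarrow> (\<exists>n. has_walk_of_length V E x y n)"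
    unfolding has_walk_of_length_def is_walk_def by (metis length_greater_0_conv gr0_conv_Suc)
  then show ?thesis unfolding gdist_def has_walk_of_length_def by simp
qed

lemma enat_Least_shift:
  fixes P Q :: "nat \<Rightarrow> bool"
  assumes "\<And>n. P n \<Longrightarrow> \<exists>m. Q m \<and> m + k \<le> n" and "\<And>m. Q m \<Longrightarrow> P (m + k)"
  shows "(if \<exists>n. P n then enat (LEAST n. P n) else \<infinity>)
       = (if \<exists>n. Q n then enat (LEAST n. Q n) else \<infinity>) + enat k"
proof (cases "\<exists>n. Q n")
  case True
  then have "P (Least Q + k)" using assms(2) LeastI_ex by blast
  then have le: "(LEAST n. P n) \<le> Least Q + k" by (rule Least_le)
  obtain m where "Q m" "m + k \<le> (LEAST n. P n)"
    using assms(1) LeastI_ex \<open>P (Least Q + k)\<close> by blast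
  then have "(LEAST n. P n) = Least Q + k" using le Least_le[of Q m] by linarith
  then show ?thesis using True \<open>P (Least Q + k)\<close> by auto
next
  case False
  then show ?thesis using assms(1) by auto
qed

lemma gdist_eq_plus:
  assumes "\<And>n. has_walk_of_length V' E' x' y' n \<Longrightarrow> \<exists>m. has_walk_of_length V E x y m \<and> m + k \<le> n"
    and "\<And>m. has_walk_of_length V E x y m \<Longrightarrow> has_walk_of_length V' E' x' y' (m + k)"
  shows "gdist V' E' x' y' = gdist V E x y + enat k"
  unfolding gdist_eq_Least using assms by (rule enat_Least_shift)

lemma gdist_self: "x \<in> V \<Longrightarrow> gdist V E x x = 0"
proof -
  assume "x \<in> V"
  then have "has_walk_of_length V E x x 0"
    unfolding has_walk_of_length_def by (intro exI[of _ "[x]"]) auto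
  then show ?thesis unfolding gdist_eq_Least by (auto simp: zero_enat_def)
qed

lemma gdist_edge:
  assumes "E x y" "x \<in> V" "y \<in> V" "x \<noteq> y"
  shows "gdist V E x y = 1"
proof -
  have one: "has_walk_of_length V E x y 1"
    unfolding has_walk_of_length_def using assms by (intro exI[of _ "[x, y]"]) auto
  moreover have "\<not> has_walk_of_length V E x y 0"
    unfolding has_walk_of_length_def using assms(4) by (auto simp: length_Suc_conv)
  ultimately have "(LEAST n. has_walk_of_length V E x y n) = 1"
    by (metis Least_equality less_one not_less)
  then show ?thesis unfolding gdist_eq_Least using one by (auto simp: one_enat_def)
qed

lemma transmission_nonneg: "transmission V E x \<ge> 0"
  by (auto simp: transmission_def ereal_of_enat_nonneg intro!: sum_nonneg)

lemma transmission_connected_real: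
  assumes "finite V" "connected_graph V E" "x \<in> V"
  obtains a where "transmission V E x = ereal a"
proof -
  have "transmission V E x \<noteq> \<infinity>"
    using assms unfolding transmission_def by (subst sum_Pinfty) (auto simp: connected_graph_def)
  then show ?thesis using that transmission_nonneg[of V E x] by (cases "transmission V E x") auto
qed

locale pendant_extension =
  fixes V :: "'a set" and E :: "'a \<Rightarrow> 'a \<Rightarrow> bool" and u z :: 'a
  assumes edges_in_V: "\<And>x y. E x y \<Longrightarrow> x \<in> V \<and> y \<in> V"
    and u_in_V: "u \<in> V" and z_notin_V: "z \<notin> V"
begin

abbreviation "V' \<equiv> insert z V"
abbreviation "E' \<equiv> pend_E E u z"

lemma u_neq_z: "u \<noteq> z"
  using u_in_V z_notin_V by auto

lemma pend_E_z_iff: "E' z w \<longleftrightarrow> w = u"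
  using edges_in_V z_notin_V by (auto simp: pend_E_def)

lemma is_walk_extension: "is_walk V E p \<Longrightarrow> is_walk V' E' p"
  by (erule is_walk_mono) (auto simp: pend_E_def)

lemma walk_shortcut:
  "is_walk V' E' p \<Longrightarrow> hd p \<noteq> z \<Longrightarrow> last p \<noteq> z \<Longrightarrow>
   \<exists>q. is_walk V E q \<and> hd q = hd p \<and> last q = last p \<and> length q \<le> length p"
proof (induction p rule: length_induct)
  case (1 p)
  show ?case
  proof (cases p rule: remdups_adj.cases)
    case 1
    then show ?thesis using "1.prems" by (simp add: is_walk_def)
  next
    case (2 x)
    then show ?thesis using "1.prems" z_notin_V by (intro exI[of _ "[x]"]) auto
  next
    case (3 x w r)
    have xw: "E' x w" and walk_wr: "is_walk V' E' (w # r)" and "x \<noteq> z"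
      using "1.prems" 3 by auto
    show ?thesis
    proof (cases "w = z")
      case True
      then have "x = u" using xw \<open>x \<noteq> z\<close> edges_in_V z_notin_V by (auto simp: pend_E_def)
      obtain r' where r: "r = u # r'"
        using "1.prems"(3) walk_wr 3 True pend_E_z_iff by (cases r) auto
      have "length r < length p" "is_walk V' E' r" "last r \<noteq> z"
        using walk_wr "1.prems"(3) 3 r by auto
      then obtain q where "is_walk V E q" "hd q = u" "last q = last r" "length q \<le> length r"
        using "1.IH" r u_neq_z by fastforce
      then show ?thesis using 3 r \<open>x = u\<close> by (intro exI[of _ q]) auto
    next
      case False
      then have "E x w" using xw \<open>x \<noteq> z\<close> by (auto simp: pend_E_def)
      obtain q where q: "is_walk V E q" "hd q = w" "last q = last (w # r)" "length q \<le> length (w # r)"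
        using "1.IH"[rule_format, of "w # r"] walk_wr "1.prems"(3) 3 False by auto
      then have "q \<noteq> []" by (auto simp: is_walk_def)
      moreover have "is_walk V E (x # q)"
        using q \<open>E x w\<close> edges_in_V by (intro is_walk_Cons_hd) auto
      ultimately show ?thesis using q 3 by (intro exI[of _ "x # q"]) auto
    qed
  qed
qed

lemma gdist_extension_old:
  assumes "x \<noteq> z" "y \<noteq> z"
  shows "gdist V' E' x y = gdist V E x y"
proof -
  have "gdist V' E' x y = gdist V E x y + enat 0"
  proof (rule gdist_eq_plus)
    fix n assume "has_walk_of_length V' E' x y n"
    then obtain p where p: "is_walk V' E' p" "hd p = x" "last p = y" "length p = Suc n"
      unfolding has_walk_of_length_def by blast
    then obtain q where q: "is_walk V E q" "hd q = x" "last q = y" "length q \<le> Suc n"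
      using walk_shortcut assms by metis
    then obtain m where "length q = Suc m" by (cases q) (auto simp: is_walk_def)
    then show "\<exists>m. has_walk_of_length V E x y m \<and> m + 0 \<le> n"
      using q unfolding has_walk_of_length_def by auto
  next
    fix m assume "has_walk_of_length V E x y m"
    then show "has_walk_of_length V' E' x y (m + 0)"
      unfolding has_walk_of_length_def using is_walk_extension by auto
  qed
  then show ?thesis by (simp add: zero_enat_def[symmetric])
qed

lemma gdist_extension_from_z:
  assumes "y \<noteq> z"
  shows "gdist V' E' z y = gdist V E u y + 1"
proof -
  have "gdist V' E' z y = gdist V E u y + enat 1"
  proof (rule gdist_eq_plus)
    fix n assume "has_walk_of_length V' E' z y n"
    then obtain p where p: "is_walk V' E' p" "hd p = z" "last p = y" "length p = Suc n"
      unfolding has_walk_of_length_def by blast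
    then obtain r where r: "p = z # u # r"
      using assms pend_E_z_iff by (cases p rule: remdups_adj.cases) auto
    moreover have "is_walk V' E' (u # r)" "last (u # r) = y"
      using p r by auto
    ultimately obtain q where q: "is_walk V E q" "hd q = u" "last q = y" "length q \<le> length (u # r)"
      using walk_shortcut[of "u # r"] assms u_neq_z by fastforce
    then obtain m where "length q = Suc m" by (cases q) (auto simp: is_walk_def)
    then show "\<exists>m. has_walk_of_length V E u y m \<and> m + 1 \<le> n"
      using q p r unfolding has_walk_of_length_def by auto
  next
    fix m assume "has_walk_of_length V E u y m"
    then obtain q where q: "is_walk V E q" "hd q = u" "last q = y" "length q = Suc m"
      unfolding has_walk_of_length_def by blast
    then have "is_walk V' E' (z # q)"
      using is_walk_extension by (intro is_walk_Cons_hd) (auto simp: pend_E_def)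
    then show "has_walk_of_length V' E' z y (m + 1)"
      unfolding has_walk_of_length_def using q by (intro exI[of _ "z # q"]) auto
  qed
  then show ?thesis by (simp add: one_enat_def)
qed

lemma transmission_extension_u:
  assumes "finite V"
  shows "transmission V' E' u = transmission V E u + 1"
proof -
  have "transmission V' E' u = ereal_of_enat (gdist V' E' u z) + (\<Sum>y\<in>V. ereal_of_enat (gdist V' E' u y))"
    unfolding transmission_def using assms z_notin_V by simp
  also have "gdist V' E' u z = 1"
    using u_in_V u_neq_z by (intro gdist_edge) (auto simp: pend_E_def)
  also have "(\<Sum>y\<in>V. ereal_of_enat (gdist V' E' u y)) = transmission V E u"
    unfolding transmission_def using gdist_extension_old u_neq_z z_notin_V by (metis sum.cong)
  finally show ?thesis by (simp add: one_enat_def one_ereal_def add.commute)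
qed

lemma transmission_extension_z:
  assumes "finite V"
  shows "transmission V' E' z = transmission V E u + card V"
proof -
  have "transmission V' E' z = ereal_of_enat (gdist V' E' z z) + (\<Sum>y\<in>V. ereal_of_enat (gdist V' E' z y))"
    unfolding transmission_def using assms z_notin_V by simp
  also have "gdist V' E' z z = 0"
    by (simp add: gdist_self)
  also have "(\<Sum>y\<in>V. ereal_of_enat (gdist V' E' z y)) = (\<Sum>y\<in>V. ereal_of_enat (gdist V E u y) + 1)"
  proof (rule sum.cong)
    have one: "ereal_of_enat 1 = 1"
      by (simp add: one_enat_def one_ereal_def)
    show "ereal_of_enat (gdist V' E' z y) = ereal_of_enat (gdist V E u y) + 1" if "y \<in> V" for y
    proof -
      have "y \<noteq> z" using that z_notin_V by auto
      then show ?thesis by (simp only: gdist_extension_from_z[OF \<open>y \<noteq> z\<close>] ereal_of_enat_add one)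
    qed
  qed simp
  also have "\<dots> = transmission V E u + card V"
    by (simp add: transmission_def sum.distrib one_ereal_def sum_ereal[symmetric])
  finally show ?thesis by simp
qed

end

lemma del_vert_pend_E:
  "v \<noteq> u \<Longrightarrow> v \<noteq> z \<Longrightarrow> del_vert_E (pend_E E u z) v = pend_E (del_vert_E E v) u z"
  by (auto simp: del_vert_E_def pend_E_def fun_eq_iff)

theorem lemma1:
  fixes V :: "'a set" and E :: "'a \<Rightarrow> 'a \<Rightarrow> bool" and v1 u z :: 'a
  assumes "simple_graph V E" and "connected_graph V E" and "v1 \<in> V"
    and "z \<notin> V" and "u \<in> V" and "u \<noteq> v1"
  shows "delta (insert z V) (pend_E E u z) v1 z = delta (insert z V) (pend_E E u z) v1 u + 1
       \<and> delta (insert z V) (pend_E E u z) v1 u + 1 = delta V E v1 u + 1"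
proof -
  have "finite V" and edges: "\<And>x y. E x y \<Longrightarrow> x \<in> V \<and> y \<in> V"
    using assms(1) unfolding simple_graph_def by auto
  interpret G: pendant_extension V E u z
    using edges assms by unfold_locales auto
  interpret H: pendant_extension "del_vert_V V v1" "del_vert_E E v1" u z
    using edges assms by unfold_locales (auto simp: del_vert_V_def del_vert_E_def)
  have deleted: "del_vert_V (insert z V) v1 = insert z (del_vert_V V v1)"
    "del_vert_E (pend_E E u z) v1 = pend_E (del_vert_E E v1) u z"
    using assms(3-6) del_vert_pend_E[of v1 u z E] by (auto simp: del_vert_V_def)
  have finite_H: "finite (del_vert_V V v1)"
    using \<open>finite V\<close> by (simp add: del_vert_V_def)
  obtain a where a: "transmission V E u = ereal a"
    using transmission_connected_real[OF \<open>finite V\<close> assms(2,5)] .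
  consider "transmission (del_vert_V V v1) (del_vert_E E v1) u = \<infinity>"
    | b where "transmission (del_vert_V V v1) (del_vert_E E v1) u = ereal b"
    using transmission_nonneg[of "del_vert_V V v1" "del_vert_E E v1" u]
    by (cases "transmission (del_vert_V V v1) (del_vert_E E v1) u") auto
  moreover have "card V = card (del_vert_V V v1) + 1"
    using card_Suc_Diff1[OF \<open>finite V\<close> assms(3)] by (simp add: del_vert_V_def)
  ultimately show ?thesis
    unfolding delta_def deleted G.transmission_extension_u[OF \<open>finite V\<close>]
      G.transmission_extension_z[OF \<open>finite V\<close>] H.transmission_extension_u[OF finite_H]
      H.transmission_extension_z[OF finite_H]
    by cases (simp_all add: a)
qed

end
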